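(* Let $0<a,b<1$, $f\ge3$, and let $q^*_n,w^*_n,\overline q_n$ be as in the context. Let $$Q(b):=\begin{bmatrix}q^*_1(b)&w^*_1(b)\\ q^*_2(b)&w^*_2(b)\end{bmatrix},\quad B:=\begin{bmatrix}\frac{b-a}{1-a}&\frac{1-b}{1-a}\\ \frac{b-a}{1-a}\beta(a,b)-x(a,b)&\frac{1-b}{1-a}\beta(a,b)\end{bmatrix},\quad M:=Q(b)^{-1}B.$$ Then for all $j\ge1$, $$\overline q_{f+j-1}=\begin{bmatrix}q^*_j(b)&w^*_j(b)\end{bmatrix}M\begin{bmatrix}q^*_{f-1}(a)\\ q^*_f(a)\end{bmatrix}.$$
   Context: Let $r,y,z$ be indeterminates. For $c\in(0,1)$: $\omega_c:=1-(1-c)^2r^2y^2z^2$, $\tau_c:=1+(1-c)^2r^2z^2y(1-y)$, $x_c:=c^2z^2\tau_c^2$, $\beta_c:=1+z^2(c^2-(1-c)^2r^2(y^2+c^2(1-y)^2z^2))$; $w^*_0(c):=(\beta_c-\omega_c)/x_c$, $w^*_1(c):=1$, $w^*_{n+1}(c):=\beta_cw^*_n(c)-x_cw^*_{n-1}(c)$ ($n\ge1$); $q^*_0(c):=-(1-y)(1+y+(1-c)^2r^2y^2z^2(1-y))/\tau_c^2$, $q^*_1(c):=y^2$, $q^*_{n+1}(c):=\beta_cq^*_n(c)-x_cq^*_{n-1}(c)$ ($n\ge1$). Also $\tau(a,b):=1+(1-a)(1-b)r^2z^2y(1-y)$, $x(a,b):=b^2z^2\tau(a,b)^2$, $\beta(a,b):=\beta_b-(b-a)b^2(1-b)r^2(1-y)^2z^4$.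 The sequence $\overline q_n$, $n\ge1$: $\overline q_n:=q^*_n(a)$ for $1\le n<f$; $\overline q_f:=\frac{1-b}{1-a}q^*_f(a)+\frac{b-a}{1-a}q^*_{f-1}(a)$; $\overline q_{f+1}:=\beta(a,b)\overline q_f-x(a,b)\overline q_{f-1}$; $\overline q_{f+j+1}:=\beta_b\overline q_{f+j}-x_b\overline q_{f+j-1}$ for $j\ge1$. *)

theory Defs
  imports "HOL-Analysis.Analysis"
begin

text \<open>The indeterminates r, y, z are evaluated at real points; parameters c, a, b are reals.\<close>

definition omega_c :: "real \<Rightarrow> real \<Rightarrow> real \<Rightarrow> real \<Rightarrow> real" where
  "omega_c r y z c = 1 - (1-c)^2 * r^2 * y^2 * z^2"

definition tau_c :: "real \<Rightarrow> real \<Rightarrow> real \<Rightarrow> real \<Rightarrow> real" where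
  "tau_c r y z c = 1 + (1-c)^2 * r^2 * z^2 * y * (1-y)"

definition x_c :: "real \<Rightarrow> real \<Rightarrow> real \<Rightarrow> real \<Rightarrow> real" where
  "x_c r y z c = c^2 * z^2 * (tau_c r y z c)^2"

definition beta_c :: "real \<Rightarrow> real \<Rightarrow> real \<Rightarrow> real \<Rightarrow> real" where
  "beta_c r y z c = 1 + z^2 * (c^2 - (1-c)^2 * r^2 * (y^2 + c^2 * (1-y)^2 * z^2))"

fun wstar :: "real \<Rightarrow> real \<Rightarrow> real \<Rightarrow> real \<Rightarrow> nat \<Rightarrow> real" where
  "wstar r y z c 0 = (beta_c r y z c - omega_c r y z c) / x_c r y z c"
| "wstar r y z c (Suc 0) = 1"
| "wstar r y z c (Suc (Suc n)) =
     beta_c r y z c * wstar r y z c (Suc n) - x_c r y z c * wstar r y z c n"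

fun qstar :: "real \<Rightarrow> real \<Rightarrow> real \<Rightarrow> real \<Rightarrow> nat \<Rightarrow> real" where
  "qstar r y z c 0 = - (1-y) * (1 + y + (1-c)^2 * r^2 * y^2 * z^2 * (1-y)) / (tau_c r y z c)^2"
| "qstar r y z c (Suc 0) = y^2"
| "qstar r y z c (Suc (Suc n)) =
     beta_c r y z c * qstar r y z c (Suc n) - x_c r y z c * qstar r y z c n"

definition tau_ab :: "real \<Rightarrow> real \<Rightarrow> real \<Rightarrow> real \<Rightarrow> real \<Rightarrow> real" where
  "tau_ab r y z a b = 1 + (1-a) * (1-b) * r^2 * z^2 * y * (1-y)"

definition x_ab :: "real \<Rightarrow> real \<Rightarrow> real \<Rightarrow> real \<Rightarrow> real \<Rightarrow> real" where
  "x_ab r y z a b = b^2 * z^2 * (tau_ab r y z a b)^2"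

definition beta_ab :: "real \<Rightarrow> real \<Rightarrow> real \<Rightarrow> real \<Rightarrow> real \<Rightarrow> real" where
  "beta_ab r y z a b = beta_c r y z b - (b-a) * b^2 * (1-b) * r^2 * (1-y)^2 * z^4"

text \<open>The sequence qbar_n (only meaningful for n \<ge> 1).\<close>
function qbar :: "real \<Rightarrow> real \<Rightarrow> real \<Rightarrow> real \<Rightarrow> real \<Rightarrow> nat \<Rightarrow> nat \<Rightarrow> real" where
  "qbar r y z a b f n =
     (if n < f then qstar r y z a n
      else if n = f then (1-b)/(1-a) * qstar r y z a f + (b-a)/(1-a) * qstar r y z a (f-1)
      else if n = f + 1 then beta_ab r y z a b * qbar r y z a b f f - x_ab r y z a b * qbar r y z a b f (f-1)
      else beta_c r y z b * qbar r y z a b f (n-1) - x_c r y z b * qbar r y z a b f (n-2))"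
  by pat_completeness auto
termination
  by (relation "Wellfounded.measure (\<lambda>(r,y,z,a,b,f,n). n)") auto

definition Qmat :: "real \<Rightarrow> real \<Rightarrow> real \<Rightarrow> real \<Rightarrow> real^2^2" where
  "Qmat r y z b = vector [vector [qstar r y z b 1, wstar r y z b 1],
                          vector [qstar r y z b 2, wstar r y z b 2]]"

definition Bmat :: "real \<Rightarrow> real \<Rightarrow> real \<Rightarrow> real \<Rightarrow> real \<Rightarrow> real^2^2" where
  "Bmat r y z a b = vector [vector [(b-a)/(1-a), (1-b)/(1-a)],
     vector [(b-a)/(1-a) * beta_ab r y z a b - x_ab r y z a b, (1-b)/(1-a) * beta_ab r y z a b]]"

definition Mmat :: "real \<Rightarrow> real \<Rightarrow> real \<Rightarrow> real \<Rightarrow> real \<Rightarrow> real^2^2" where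
  "Mmat r y z a b = matrix_inv (Qmat r y z b) ** Bmat r y z a b"

end

theory Submission
  imports Defs
begin

text \<open>From index f on, qbar obeys the three-term recurrence of q* and w* at parameter b, so it
  is the combination of these two fundamental solutions whose coefficients match its first two
  values qbar_f, qbar_(f+1). These two values are B applied to (q*_(f-1)(a), q*_f(a)), and
  the first two values of the fundamental solutions form the rows of Q(b); hence the
  coefficient vector is Q(b)^(-1) B (q*_(f-1)(a), q*_f(a)). Beyond the invertibility of Q(b)
  this only needs f \<ge> 1.\<close>

lemma second_order_recurrence_combination:
  fixes u s t :: "nat \<Rightarrow> 'a::comm_ring"
  assumes "\<And>n. u (n + 2) = \<beta> * u (n + 1) - \<xi> * u n"
    and "\<And>n. s (n + 2) = \<beta> * s (n + 1) - \<xi> * s n"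
    and "\<And>n. t (n + 2) = \<beta> * t (n + 1) - \<xi> * t n"
    and "u 0 = c * s 0 + d * t 0" "u 1 = c * s 1 + d * t 1"
  shows "u n = c * s n + d * t n"
proof -
  have "u n = c * s n + d * t n \<and> u (n + 1) = c * s (n + 1) + d * t (n + 1)"
  proof (induction n)
    case 0
    then show ?case using assms(4,5) by simp
  next
    case (Suc n)
    then have "u (n + 2) = c * s (n + 2) + d * t (n + 2)"
      unfolding assms(1-3) by (simp add: algebra_simps)
    with Suc show ?case by simp
  qed
  then show ?thesis ..
qed

lemma invertible_matrix_inv_right:
  fixes A :: "'a::semiring_1^'n^'n"
  assumes "invertible A"
  shows "A ** matrix_inv A = mat 1"
  using assms unfolding invertible_def matrix_inv_def by (metis (mono_tags, lifting) someI_ex)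

lemma matrix_vector_mult_2:
  fixes A :: "'a::comm_semiring_1^2^2"
  shows "A *v v = vector [A$1$1 * v$1 + A$1$2 * v$2, A$2$1 * v$1 + A$2$2 * v$2]"
  by (simp add: vec_eq_iff forall_2 matrix_vector_mult_def sum_2)

lemma inner_vector_2:
  fixes p q :: real
  shows "vector [p, q] \<bullet> (v :: real^2) = p * v$1 + q * v$2"
  by (simp add: inner_vec_def sum_2)

declare qbar.simps [simp del]

lemma qbar_less: "n < f \<Longrightarrow> qbar r y z a b f n = qstar r y z a n"
  by (subst qbar.simps) simp

lemma qbar_initial:
  assumes "f \<ge> 1"
  shows "vector [qbar r y z a b f f, qbar r y z a b f (f + 1)] =
    Bmat r y z a b *v vector [qstar r y z a (f - 1), qstar r y z a f]"
proof -
  have qbar_f: "qbar r y z a b f f = (1-b)/(1-a) * qstar r y z a f + (b-a)/(1-a) * qstar r y z a (f-1)"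
    by (subst qbar.simps) simp
  have qbar_f1: "qbar r y z a b f (f + 1) =
      beta_ab r y z a b * qbar r y z a b f f - x_ab r y z a b * qbar r y z a b f (f - 1)"
    by (subst qbar.simps) simp
  have "qbar r y z a b f (f - 1) = qstar r y z a (f - 1)"
    using assms by (simp add: qbar_less)
  then show ?thesis
    unfolding qbar_f1 qbar_f by (simp add: Bmat_def matrix_vector_mult_2 algebra_simps)
qed

lemma qbar_shift_recurrence:
  "qbar r y z a b f (f + (n + 2)) =
    beta_c r y z b * qbar r y z a b f (f + (n + 1)) - x_c r y z b * qbar r y z a b f (f + n)"
  by (subst qbar.simps) (simp add: numeral_2_eq_2)

lemma Qmat_mult:
  "Qmat r y z b *v c =
    vector [c$1 * qstar r y z b 1 + c$2 * wstar r y z b 1,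
            c$1 * qstar r y z b 2 + c$2 * wstar r y z b 2]"
  by (simp add: Qmat_def matrix_vector_mult_2 mult.commute)

lemma qbar_tail_combination:
  fixes r y z a b :: real
  assumes "f \<ge> 1" "invertible (Qmat r y z b)"
  defines "c \<equiv> Mmat r y z a b *v vector [qstar r y z a (f - 1), qstar r y z a f]"
  shows "qbar r y z a b f (f + n) = c$1 * qstar r y z b (Suc n) + c$2 * wstar r y z b (Suc n)"
proof -
  have "Qmat r y z b *v c = Bmat r y z a b *v vector [qstar r y z a (f - 1), qstar r y z a f]"
    using assms(2) unfolding c_def Mmat_def
    by (simp add: matrix_vector_mul_assoc matrix_mul_assoc invertible_matrix_inv_right)
  then have initial: "vector [qbar r y z a b f f, qbar r y z a b f (f + 1)] = Qmat r y z b *v c"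
    using qbar_initial[OF assms(1)] by simp
  show ?thesis
  proof (rule second_order_recurrence_combination
      [where u = "\<lambda>n. qbar r y z a b f (f + n)" and s = "\<lambda>n. qstar r y z b (Suc n)"
         and t = "\<lambda>n. wstar r y z b (Suc n)", OF qbar_shift_recurrence])
    show "qbar r y z a b f (f + 0) = c$1 * qstar r y z b (Suc 0) + c$2 * wstar r y z b (Suc 0)"
      and "qbar r y z a b f (f + 1) = c$1 * qstar r y z b (Suc 1) + c$2 * wstar r y z b (Suc 1)"
      using initial unfolding Qmat_mult
      by (simp_all add: vec_eq_iff forall_2 numeral_2_eq_2 del: qstar.simps wstar.simps)
  qed (simp_all add: numeral_2_eq_2)
qed

theorem lemma5:
  fixes r y z a b :: real and f j :: nat
  assumes "0 < a" "a < 1" "0 < b" "b < 1" "f \<ge> 3" "j \<ge> 1"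
    and "z \<noteq> 0" "tau_c r y z a \<noteq> 0" "tau_c r y z b \<noteq> 0"
    and "invertible (Qmat r y z b)"
  shows "qbar r y z a b f (f + j - 1) =
    (vector [qstar r y z b j, wstar r y z b j] :: real^2) \<bullet>
      (Mmat r y z a b *v (vector [qstar r y z a (f-1), qstar r y z a f] :: real^2))"
proof -
  obtain k where j: "j = Suc k" using assms(6) by (cases j) auto
  have "f \<ge> 1" using assms(5) by simp
  from qbar_tail_combination[OF this assms(10), where n = k] show ?thesis
    unfolding j inner_vector_2 by (simp add: mult.commute)
qed

end
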